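(* For every integer $N\ge1$ there exists $C=C(\lambda,N)>1$ such that the following holds. Let $\nu\in\mathcal{M}(\mathbb{R}^{d})$, $0<\beta<1/2$ and $t_{2}>t_{1}>0$ with $t_{2}-t_{1}>3N-\frac{1}{\log\lambda_{1}}$ and $\frac{1}{t_{2}-t_{1}}H(\nu;\lambda^{t_{2}}\mid\lambda^{t_{1}})>\beta$. Set $\tau_{1}:=\lceil\frac{t_{1}}{N}+1-\frac{1}{N\log\lambda_{1}}\rceil$ and $\tau_{2}:=\lfloor\frac{t_{2}}{N}\rfloor$, and let $\mathcal{N}$ be the set of all integers $\tau_{1}\le n<\tau_{2}$ such that \[ H(\nu;s_{Nn}\mid s_{Nn-N})\ge\max\Big\{\tfrac{2}{3}H(\nu;s_{Nn+N}\mid s_{Nn}),\tfrac{\beta}{6}\Big\}. \] Then $\sum_{n\in\mathcal{N}}H(\nu;s_{Nn}\mid s_{Nn-N})\ge\frac{\beta}{6}(t_{2}-t_{1})-C$.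
   Context: Fix $d\ge1$ and $\lambda=(\lambda_1,\dots,\lambda_d)\in(0,1)^d$ with $\lambda_1>\dots>\lambda_d$; logs base 2; $\lambda^t:=(\lambda_1^t,\dots,\lambda_d^t)$. $\mathcal{M}(\mathbb{R}^d)$: compactly supported Borel probability measures. Sequence $s_n=(s_{n,1},\dots,s_{n,d})$: $s_{0,j}=1$, $s_{n+1,j}=s_{n,j}/b_{n+1,j}$, where $b_{n+1,j}$ is the unique positive integer with $s_{n,j}/b_{n+1,j}\ge\lambda_j^{n+1}>s_{n,j}/(1+b_{n+1,j})$. Average entropy: for $\mu$ the law of bounded $X$ and $r\in\mathbb{R}^d_{>0}$, $H(\mu;r):=\int_{[0,1)^d}H(\lfloor X/r+x\rfloor)dx$ (coordinatewise division/floor, Shannon entropy) and $H(\mu;r\mid r'):=H(\mu;r)-H(\mu;r')$. *)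

theory Defs
  imports "HOL-Analysis.Analysis" "HOL-Probability.Probability"
begin

text \<open>Coordinates are indexed by a finite linearly ordered type 'd (so d = CARD('d)).\<close>

definition admissible_lambda :: "real^'d::{finite,linorder} \<Rightarrow> bool" where
  "admissible_lambda lam \<longleftrightarrow> (\<forall>i. 0 < lam$i \<and> lam$i < 1) \<and> (\<forall>i j. i < j \<longrightarrow> lam$j < lam$i)"

definition lam1 :: "real^'d::{finite,linorder} \<Rightarrow> real" where
  "lam1 lam = lam $ (LEAST i. True)"

definition vpowr :: "real^'d::finite \<Rightarrow> real \<Rightarrow> real^'d" where
  "vpowr lam t = (\<chi> i. (lam$i) powr t)"

definition cpt_prob :: "(real^'d::finite) measure \<Rightarrow> bool" where
  "cpt_prob \<nu> \<longleftrightarrow> prob_space \<nu> \<and> sets \<nu> = sets borel \<and>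
     (\<exists>K. compact K \<and> emeasure \<nu> K = 1)"

fun seq_s :: "real^'d::finite \<Rightarrow> nat \<Rightarrow> real^'d" where
  "seq_s lam 0 = (\<chi> j. 1)"
| "seq_s lam (Suc n) = (\<chi> j. seq_s lam n $ j /
     real (THE b::nat. 0 < b \<and> seq_s lam n $ j / real b \<ge> (lam$j) ^ Suc n
                    \<and> (lam$j) ^ Suc n > seq_s lam n $ j / (1 + real b)))"

definition floor_ent :: "(real^'d::finite) measure \<Rightarrow> real^'d \<Rightarrow> real^'d \<Rightarrow> real" where
  "floor_ent \<mu> r x =
     infsum (\<lambda>k::int^'d. let p = measure \<mu> {y \<in> space \<mu>. (\<chi> i. \<lfloor>y$i / r$i + x$i\<rfloor>) = k}
                        in if p = 0 then 0 else - p * log 2 p) UNIV"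

definition avg_ent :: "(real^'d::finite) measure \<Rightarrow> real^'d \<Rightarrow> real" where
  "avg_ent \<mu> r = (LINT x : {x. \<forall>i. 0 \<le> x$i \<and> x$i < 1} | lborel. floor_ent \<mu> r x)"

definition cond_ent :: "(real^'d::finite) measure \<Rightarrow> real^'d \<Rightarrow> real^'d \<Rightarrow> real" where
  "cond_ent \<mu> r r' = avg_ent \<mu> r - avg_ent \<mu> r'"

end

theory Submission
  imports Defs
begin

(* If r' <= R r coordinatewise, every cell of the r'-grid meets at most (R + 2)^d cells of the
   r-grid, so H(nu; r) <= H(nu; r') + d log (R + 2), for every shift and hence on average.
   Since lambda^n <= s_n <= 2 lambda^n, scales whose exponents differ by a bounded amount
   have average entropies differing by at most a constant D. Therefore the block entropies
   a_n = H(nu; s_Nn | s_(Nn-N)), tau1 <= n < tau2, telescope to at least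
   H(nu; lambda^t2 | lambda^t1) - 2D > beta (t2 - t1) - 2D, while a_tau2 <= D.
   A block that is not good is either below beta/6 or below 2/3 of its successor; charging
   the latter to the successor shows that three times the good blocks, plus beta/6 per
   block, plus 2D, dominate the total. *)

section \<open>Entropy of discrete observables\<close>

definition shannon_term :: "real \<Rightarrow> real" where
  "shannon_term p = (if p = 0 then 0 else - p * log 2 p)"

definition disc_entropy :: "'a measure \<Rightarrow> ('a \<Rightarrow> 'k) \<Rightarrow> real" where
  "disc_entropy M F = infsum (\<lambda>k. shannon_term (measure M {y \<in> space M. F y = k})) UNIV"

lemma shannon_term_nonneg: "0 \<le> p \<Longrightarrow> p \<le> 1 \<Longrightarrow> 0 \<le> shannon_term p"
  unfolding shannon_term_def by (auto simp: mult_le_0_iff)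

lemma shannon_term_add_le:
  assumes "0 \<le> a" "0 \<le> b"
  shows "shannon_term (a + b) \<le> shannon_term a + shannon_term b"
proof (cases "a = 0 \<or> b = 0")
  case True
  then show ?thesis by (auto simp: shannon_term_def)
next
  case False
  with assms have "0 < a" "0 < b" by auto
  then have "a * log 2 a \<le> a * log 2 (a + b)" "b * log 2 b \<le> b * log 2 (a + b)"
    by (simp_all add: mult_left_mono)
  moreover have "shannon_term (a + b) = - a * log 2 (a + b) - b * log 2 (a + b)"
    "shannon_term a = - a * log 2 a" "shannon_term b = - b * log 2 b"
    using \<open>0 < a\<close> \<open>0 < b\<close> by (simp_all add: shannon_term_def algebra_simps)
  ultimately show ?thesis by linarith
qed

lemma shannon_term_sum_le:
  assumes "\<And>x. x \<in> S \<Longrightarrow> 0 \<le> f x"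
  shows "shannon_term (sum f S) \<le> (\<Sum>x\<in>S. shannon_term (f x))"
  using assms
proof (induction S rule: infinite_finite_induct)
  case (insert x F)
  then have "shannon_term (sum f (insert x F)) \<le> shannon_term (f x) + shannon_term (sum f F)"
    by (simp add: shannon_term_add_le sum_nonneg)
  with insert show ?case by simp
qed (simp_all add: shannon_term_def)

text \<open>Gibbs' inequality in pointwise form: ln x \<le> x - 1 at x = q / (M p).\<close>
lemma shannon_term_le_gibbs:
  assumes "0 < p" "0 < q" "1 \<le> M"
  shows "shannon_term p \<le> p * (- log 2 q) + p * log 2 M + (q / M - p) / ln 2"
proof -
  have "p * ln (q / (M * p)) \<le> p * (q / (M * p) - 1)"
    using assms by (intro mult_left_mono ln_le_minus_one) auto
  also have "\<dots> = q / M - p" using assms by (simp add: field_simps)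
  finally have "p * (ln q - ln M - ln p) \<le> q / M - p"
    using assms by (simp add: ln_div ln_mult diff_diff_eq)
  then have "p * (ln q - ln M - ln p) / ln 2 \<le> (q / M - p) / ln 2"
    by (simp add: divide_right_mono)
  with assms show ?thesis by (simp add: shannon_term_def log_def field_simps)
qed

lemma sum_shannon_term_le_log_card:
  assumes "finite T" and nonneg: "\<And>a. a \<in> T \<Longrightarrow> 0 \<le> p a"
    and card: "real (card {a\<in>T. p a \<noteq> 0}) \<le> M"
  shows "(\<Sum>a\<in>T. shannon_term (p a)) \<le> shannon_term (sum p T) + sum p T * log 2 M"
proof -
  define S where "S = {a\<in>T. p a \<noteq> 0}"
  define q where "q = sum p S"
  have "finite S" using \<open>finite T\<close> by (simp add: S_def)
  have pos: "0 < p a" if "a \<in> S" for a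
    using nonneg that by (force simp: S_def)
  have sum_S: "(\<Sum>a\<in>T. shannon_term (p a)) = (\<Sum>a\<in>S. shannon_term (p a))" "sum p T = q"
    unfolding q_def
    by (rule sum.mono_neutral_right, fact, auto simp: S_def shannon_term_def)+
  show ?thesis
  proof (cases "S = {}")
    case True
    then show ?thesis using sum_S by (simp add: q_def shannon_term_def)
  next
    case False
    then have "0 < q" unfolding q_def using \<open>finite S\<close> pos by (intro sum_pos) auto
    have "1 \<le> card S" using False \<open>finite S\<close> by (simp add: Suc_le_eq card_gt_0_iff)
    then have "1 \<le> M" "real (card S) \<le> M" using card by (auto simp: S_def)
    have "(\<Sum>a\<in>S. shannon_term (p a))
        \<le> (\<Sum>a\<in>S. p a * (- log 2 q) + p a * log 2 M + (q / M - p a) / ln 2)"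
      using pos \<open>0 < q\<close> \<open>1 \<le> M\<close> by (intro sum_mono shannon_term_le_gibbs)
    also have "\<dots> = q * (- log 2 q) + q * log 2 M + (real (card S) * q / M - q) / ln 2"
      by (simp add: sum.distrib q_def sum_distrib_right[symmetric] sum_divide_distrib[symmetric]
          sum_subtractf)
    also have "\<dots> \<le> q * (- log 2 q) + q * log 2 M"
    proof -
      have "real (card S) * q / M \<le> q"
        using \<open>real (card S) \<le> M\<close> \<open>0 < q\<close> \<open>1 \<le> M\<close> by (simp add: field_simps)
      then show ?thesis by (simp add: divide_nonpos_pos)
    qed
    also have "\<dots> = shannon_term q + q * log 2 M" using \<open>0 < q\<close> by (simp add: shannon_term_def)
    finally show ?thesis using sum_S by simp
  qed
qed

lemma (in prob_space) measure_eq_sum_fibres: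
  assumes "A \<in> events" "finite T" "AE y in M. G y \<in> T"
    and fibres: "\<And>b. {y \<in> space M. G y = b} \<in> events"
  shows "prob A = (\<Sum>b\<in>T. prob (A \<inter> {y \<in> space M. G y = b}))"
proof -
  have "AE y in M. y \<in> A \<longleftrightarrow> y \<in> (\<Union>b\<in>T. A \<inter> {y \<in> space M. G y = b})"
    using assms(3) AE_space by eventually_elim auto
  then have "prob A = prob (\<Union>b\<in>T. A \<inter> {y \<in> space M. G y = b})"
    using assms by (intro measure_eq_AE) auto
  also have "\<dots> = (\<Sum>b\<in>T. prob (A \<inter> {y \<in> space M. G y = b}))"
    using assms by (intro finite_measure_finite_Union) (auto simp: disjoint_family_on_def)
  finally show ?thesis .
qed

lemma (in prob_space) disc_entropy_eq_sum:
  assumes "finite T" "AE y in M. F y \<in> T"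
    and fibres: "\<And>k. {y \<in> space M. F y = k} \<in> events"
  shows "disc_entropy M F = (\<Sum>a\<in>T. shannon_term (prob {y \<in> space M. F y = a}))"
proof -
  have "prob {y \<in> space M. F y = a} = 0" if "a \<notin> T" for a
  proof -
    have "AE y in M. y \<in> {y \<in> space M. F y = a} \<longleftrightarrow> y \<in> {}"
      using assms(2) by eventually_elim (use that in auto)
    then show ?thesis using fibres by (subst measure_eq_AE) auto
  qed
  then have "disc_entropy M F = infsum (\<lambda>k. shannon_term (prob {y \<in> space M. F y = k})) T"
    unfolding disc_entropy_def by (intro infsum_cong_neutral) (auto simp: shannon_term_def)
  then show ?thesis using \<open>finite T\<close> by simp
qed

lemma (in prob_space) card_joint_support_le:
  assumes "finite S" "\<forall>y \<in> space M. G y = b \<longrightarrow> F y \<in> S"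
  shows "card {a\<in>T. prob ({y \<in> space M. F y = a} \<inter> {y \<in> space M. G y = b}) \<noteq> 0} \<le> card S"
proof -
  have "{y \<in> space M. F y = a} \<inter> {y \<in> space M. G y = b} = {}" if "a \<notin> S" for a
    using assms(2) that by blast
  then have "{a\<in>T. prob ({y \<in> space M. F y = a} \<inter> {y \<in> space M. G y = b}) \<noteq> 0} \<subseteq> S"
    by (metis (mono_tags, lifting) measure_empty mem_Collect_eq subsetI)
  with assms(1) show ?thesis by (rule card_mono)
qed

lemma (in prob_space) disc_entropy_le_coarser:
  assumes TF: "finite TF" "AE y in M. F y \<in> TF" and TG: "finite TG" "AE y in M. G y \<in> TG"
    and F_fibres: "\<And>a. {y \<in> space M. F y = a} \<in> events"
    and G_fibres: "\<And>b. {y \<in> space M. G y = b} \<in> events"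
    and few_values: "\<And>b. \<exists>S. finite S \<and> real (card S) \<le> K \<and>
                          (\<forall>y \<in> space M. G y = b \<longrightarrow> F y \<in> S)"
    and "1 \<le> K"
  shows "disc_entropy M F \<le> disc_entropy M G + log 2 K"
proof -
  define p where "p a b = prob ({y \<in> space M. F y = a} \<inter> {y \<in> space M. G y = b})" for a b
  have p_nonneg: "0 \<le> p a b" for a b by (simp add: p_def)
  have marg_F: "prob {y \<in> space M. F y = a} = (\<Sum>b\<in>TG. p a b)" for a
    unfolding p_def by (rule measure_eq_sum_fibres[OF F_fibres TG G_fibres])
  have marg_G: "prob {y \<in> space M. G y = b} = (\<Sum>a\<in>TF. p a b)" for b
    unfolding p_def Int_commute[of "{y \<in> space M. F y = _}"]
    by (rule measure_eq_sum_fibres[OF G_fibres TF F_fibres])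
  have total: "(\<Sum>b\<in>TG. prob {y \<in> space M. G y = b}) = 1"
    using measure_eq_sum_fibres[OF sets.top TG G_fibres] by (simp add: prob_space Int_absorb1)
  have fibre_bound: "(\<Sum>a\<in>TF. shannon_term (p a b))
      \<le> shannon_term (\<Sum>a\<in>TF. p a b) + (\<Sum>a\<in>TF. p a b) * log 2 K" for b
  proof -
    obtain S where S: "finite S" "real (card S) \<le> K" "\<forall>y \<in> space M. G y = b \<longrightarrow> F y \<in> S"
      using few_values by blast
    have "card {a\<in>TF. p a b \<noteq> 0} \<le> card S"
      unfolding p_def by (rule card_joint_support_le[OF S(1,3)])
    then show ?thesis
      using S(2) by (intro sum_shannon_term_le_log_card TF p_nonneg) linarith
  qed
  have "disc_entropy M F = (\<Sum>a\<in>TF. shannon_term (\<Sum>b\<in>TG. p a b))"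
    by (simp add: disc_entropy_eq_sum[OF TF F_fibres] marg_F)
  also have "\<dots> \<le> (\<Sum>a\<in>TF. \<Sum>b\<in>TG. shannon_term (p a b))"
    by (intro sum_mono shannon_term_sum_le p_nonneg)
  also have "\<dots> = (\<Sum>b\<in>TG. \<Sum>a\<in>TF. shannon_term (p a b))"
    by (rule sum.swap)
  also have "\<dots> \<le> (\<Sum>b\<in>TG. shannon_term (\<Sum>a\<in>TF. p a b) + (\<Sum>a\<in>TF. p a b) * log 2 K)"
    by (intro sum_mono fibre_bound)
  also have "\<dots> = disc_entropy M G + log 2 K"
    using total by (simp add: disc_entropy_eq_sum[OF TG G_fibres] marg_G sum.distrib
        sum_distrib_right[symmetric])
  finally show ?thesis .
qed

section \<open>Grid cells\<close>

definition grid_cell :: "real^'d::finite \<Rightarrow> real^'d \<Rightarrow> real^'d \<Rightarrow> int^'d" where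
  "grid_cell r x y = (\<chi> i. \<lfloor>y$i / r$i + x$i\<rfloor>)"

lemma floor_ent_eq_disc_entropy: "floor_ent \<nu> r x = disc_entropy \<nu> (grid_cell r x)"
  unfolding floor_ent_def disc_entropy_def shannon_term_def grid_cell_def Let_def ..

lemma cpt_probD:
  assumes "cpt_prob \<nu>"
  shows "prob_space \<nu>" "sets \<nu> = sets borel" "space \<nu> = UNIV" "\<exists>B. AE y in \<nu>. norm y \<le> B"
proof -
  from assms obtain K where ps: "prob_space \<nu>" and sets: "sets \<nu> = sets borel"
    and K: "compact K" "emeasure \<nu> K = 1"
    unfolding cpt_prob_def by auto
  show "prob_space \<nu>" "sets \<nu> = sets borel" by fact+
  then show "space \<nu> = UNIV" using sets_eq_imp_space_eq by fastforce
  obtain B where "\<And>y. y \<in> K \<Longrightarrow> norm y \<le> B"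
    using compact_imp_bounded[OF K(1)] by (auto simp: bounded_iff)
  moreover have "AE y in \<nu>. y \<in> K"
    using K(2) by (intro prob_space.AE_prob_1[OF ps]) (simp add: measure_def)
  ultimately show "\<exists>B. AE y in \<nu>. norm y \<le> B" by (metis (mono_tags, lifting) AE_mp AE_I2)
qed

lemma grid_cell_fibre_sets:
  fixes \<nu> :: "(real^'d::finite) measure"
  assumes "sets \<nu> = sets borel"
  shows "{y \<in> space \<nu>. grid_cell r x y = k} \<in> sets \<nu>"
proof -
  have "Measurable.pred borel (\<lambda>y::real^'d. \<forall>i\<in>UNIV. \<lfloor>y$i / r$i + x$i\<rfloor> = k$i)"
    by measurable
  then show ?thesis
    using assms sets_eq_imp_space_eq[OF assms] by (simp add: pred_def grid_cell_def vec_eq_iff)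
qed

lemma
  fixes A :: "'d::finite \<Rightarrow> 'a set"
  assumes "\<And>i. finite (A i)"
  shows finite_vec_box: "finite {k::'a^'d. \<forall>i. k$i \<in> A i}"
    and card_vec_box: "card {k::'a^'d. \<forall>i. k$i \<in> A i} = (\<Prod>i\<in>UNIV. card (A i))"
proof -
  have box: "{k::'a^'d. \<forall>i. k$i \<in> A i} = vec_lambda ` PiE UNIV A"
  proof (intro equalityI subsetI)
    fix k :: "'a^'d" assume "k \<in> {k. \<forall>i. k$i \<in> A i}"
    then have "vec_nth k \<in> PiE UNIV A" by auto
    then show "k \<in> vec_lambda ` PiE UNIV A" by (metis image_eqI vec_nth_inverse)
  qed auto
  have "inj_on vec_lambda (PiE UNIV A)"
    by (auto simp: inj_on_def vec_lambda_inject)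
  then show "finite {k::'a^'d. \<forall>i. k$i \<in> A i}"
    and "card {k::'a^'d. \<forall>i. k$i \<in> A i} = (\<Prod>i\<in>UNIV. card (A i))"
    unfolding box using assms by (simp_all add: finite_PiE card_image card_PiE)
qed

lemma abs_floor_add_le:
  fixes u z :: real
  assumes "\<bar>u\<bar> \<le> B"
  shows "\<bar>\<lfloor>u + z\<rfloor>\<bar> \<le> \<lceil>B + \<bar>z\<bar>\<rceil> + 1"
  using assms le_of_int_ceiling[of "B + \<bar>z\<bar>"] of_int_floor_le[of "u + z"]
    real_of_int_floor_gt_diff_one[of "u + z"]
  by linarith

lemma grid_cell_bounded:
  fixes x y :: "real^'d::finite"
  assumes "norm y \<le> B" "norm x \<le> X" "0 < r$i"
  shows "\<bar>grid_cell r x y $ i\<bar> \<le> \<lceil>B / r$i + X\<rceil> + 1"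
proof -
  have "\<bar>y$i\<bar> \<le> B" "\<bar>x$i\<bar> \<le> X"
    using assms(1,2) component_le_norm_cart[of y i] component_le_norm_cart[of x i] by linarith+
  then have "\<bar>y$i / r$i\<bar> \<le> B / r$i" using assms(3) by (simp add: abs_div divide_right_mono)
  then have "\<bar>grid_cell r x y $ i\<bar> \<le> \<lceil>B / r$i + \<bar>x$i\<bar>\<rceil> + 1"
    unfolding grid_cell_def by (simp add: abs_floor_add_le)
  also have "\<dots> \<le> \<lceil>B / r$i + X\<rceil> + 1"
    using \<open>\<bar>x$i\<bar> \<le> X\<close> by (simp add: ceiling_mono)
  finally show ?thesis .
qed

lemma floor_mem_window:
  fixes u v L :: real
  assumes "u \<le> v" "v < u + L"
  shows "\<lfloor>v\<rfloor> \<in> {\<lfloor>u\<rfloor> .. \<lfloor>u\<rfloor> + \<lceil>L\<rceil>}"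
proof -
  have "of_int \<lfloor>v\<rfloor> < of_int \<lfloor>u\<rfloor> + 1 + real_of_int \<lceil>L\<rceil>"
    using assms of_int_floor_le[of v] real_of_int_floor_gt_diff_one[of u] le_of_int_ceiling[of L]
    by linarith
  then show ?thesis using assms(1) by (simp add: floor_mono)
qed

lemma card_ceiling_window_le:
  fixes L R :: real
  assumes "0 < L" "L \<le> R"
  shows "real (card {l .. l + \<lceil>L\<rceil>}) \<le> R + 2"
proof -
  have "real (card {l .. l + \<lceil>L\<rceil>}) = of_int \<lceil>L\<rceil> + 1"
    using assms(1) by simp
  then show ?thesis using assms(2) of_int_ceiling_le_add_one[of L] by linarith
qed

lemma grid_cells_meeting_coarse_cell:
  fixes r r' :: "real^'d::finite"
  assumes r: "\<And>i. 0 < r$i" and r': "\<And>i. 0 < r'$i" and R: "\<And>i. r'$i \<le> R * r$i"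
  shows "\<exists>S. finite S \<and> real (card S) \<le> (R + 2) ^ CARD('d) \<and>
           (\<forall>y. grid_cell r' x' y = b \<longrightarrow> grid_cell r x y \<in> S)"
proof -
  define l where "l i = \<lfloor>(of_int (b$i) - x'$i) * r'$i / r$i + x$i\<rfloor>" for i
  define c where "c i = \<lceil>r'$i / r$i\<rceil>" for i
  define S where "S = {k::int^'d. \<forall>i. k$i \<in> {l i .. l i + c i}}"
  have "grid_cell r x y \<in> S" if "grid_cell r' x' y = b" for y
    unfolding S_def
  proof (intro CollectI allI)
    fix i
    define u where "u = (of_int (b$i) - x'$i) * r'$i / r$i + x$i"
    have "\<lfloor>y$i / r'$i + x'$i\<rfloor> = b$i"
      using that by (auto simp: grid_cell_def)
    then have "(of_int (b$i) - x'$i) * r'$i \<le> y$i" "y$i < (of_int (b$i) - x'$i) * r'$i + r'$i"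
      using r'[of i] by (simp_all add: floor_eq_iff field_simps)
    then have "u \<le> y$i / r$i + x$i" "y$i / r$i + x$i < u + r'$i / r$i"
      using r[of i] by (simp_all add: u_def divide_right_mono add_divide_distrib[symmetric]
          divide_strict_right_mono)
    then have "\<lfloor>y$i / r$i + x$i\<rfloor> \<in> {\<lfloor>u\<rfloor> .. \<lfloor>u\<rfloor> + \<lceil>r'$i / r$i\<rceil>}"
      by (rule floor_mem_window)
    then show "grid_cell r x y $ i \<in> {l i .. l i + c i}"
      by (simp add: grid_cell_def l_def c_def u_def)
  qed
  moreover have "finite S" unfolding S_def by (rule finite_vec_box) simp
  moreover have "real (card S) \<le> (R + 2) ^ CARD('d)"
  proof -
    have "r'$i / r$i \<le> R" "0 < r'$i / r$i" for i
      using R[of i] r[of i] r'[of i] by (simp_all add: pos_divide_le_eq)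
    then have "(\<Prod>i\<in>UNIV. real (card {l i .. l i + c i})) \<le> (\<Prod>i\<in>(UNIV::'d set). R + 2)"
      unfolding c_def by (intro prod_mono conjI card_ceiling_window_le) simp_all
    moreover have "card S = (\<Prod>i\<in>UNIV. card {l i .. l i + c i})"
      unfolding S_def by (rule card_vec_box) simp
    ultimately show ?thesis by simp
  qed
  ultimately show ?thesis by blast
qed

lemma cpt_prob_grid_cells_finite:
  fixes \<nu> :: "(real^'d::finite) measure" and s :: "real^'d"
  assumes "cpt_prob \<nu>" and s: "\<And>i. 0 < s$i"
  shows "\<exists>T. finite T \<and> (\<forall>z. norm z \<le> X \<longrightarrow> (AE y in \<nu>. grid_cell s z y \<in> T))"
proof -
  obtain B where B: "AE y in \<nu>. norm y \<le> B" using cpt_probD[OF assms(1)] by blast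
  define Z where "Z i = \<lceil>B / s$i + X\<rceil> + 1" for i
  define T where "T = {k. \<forall>i. k$i \<in> {- Z i .. Z i}}"
  have "AE y in \<nu>. grid_cell s z y \<in> T" if "norm z \<le> X" for z
    using B
  proof eventually_elim
    case (elim y)
    then have "\<forall>i. \<bar>grid_cell s z y $ i\<bar> \<le> Z i"
      using grid_cell_bounded[OF elim that s] by (simp add: Z_def)
    then show ?case by (simp add: T_def abs_le_iff minus_le_iff)
  qed
  moreover have "finite T" unfolding T_def by (rule finite_vec_box) simp
  ultimately show ?thesis by blast
qed

lemma floor_ent_le_coarser:
  fixes \<nu> :: "(real^'d::finite) measure" and r r' :: "real^'d"
  assumes "cpt_prob \<nu>" and r: "\<And>i. 0 < r$i" and r': "\<And>i. 0 < r'$i"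
    and R: "\<And>i. r'$i \<le> R * r$i"
  shows "floor_ent \<nu> r x \<le> floor_ent \<nu> r' x' + log 2 ((R + 2) ^ CARD('d))"
proof -
  interpret prob_space \<nu> using cpt_probD[OF assms(1)] by simp
  obtain TF where "finite TF" "AE y in \<nu>. grid_cell r x y \<in> TF"
    using cpt_prob_grid_cells_finite[OF assms(1) r, of "norm x"] by blast
  moreover obtain TG where "finite TG" "AE y in \<nu>. grid_cell r' x' y \<in> TG"
    using cpt_prob_grid_cells_finite[OF assms(1) r', of "norm x'"] by blast
  moreover have "0 < R"
    using less_le_trans[OF r' R] r by (metis zero_less_mult_pos2)
  moreover have "\<exists>S. finite S \<and> real (card S) \<le> (R + 2) ^ CARD('d) \<and>
      (\<forall>y \<in> space \<nu>. grid_cell r' x' y = b \<longrightarrow> grid_cell r x y \<in> S)" for b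
    using grid_cells_meeting_coarse_cell[OF r r' R, of x' b x] by blast
  ultimately show ?thesis
    unfolding floor_ent_eq_disc_entropy
    by (intro disc_entropy_le_coarser grid_cell_fibre_sets cpt_probD[OF assms(1)]) auto
qed

section \<open>Average entropy\<close>

lemma (in prob_space) disc_entropy_nonneg: "0 \<le> disc_entropy M F"
  unfolding disc_entropy_def by (intro infsum_nonneg shannon_term_nonneg) auto

lemma floor_ent_nonneg: "cpt_prob \<nu> \<Longrightarrow> 0 \<le> floor_ent \<nu> r x"
  unfolding floor_ent_eq_disc_entropy
  by (intro prob_space.disc_entropy_nonneg cpt_probD)

lemma borel_measurable_vec_nth [measurable]: "(\<lambda>x::real^'d::finite. x$i) \<in> borel_measurable borel"
  by (intro borel_measurable_continuous_onI linear_continuous_on bounded_linear_vec_nth)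

lemma measurable_measure_grid_fibre:
  fixes \<nu> :: "(real^'d::finite) measure"
  assumes "prob_space \<nu>" "sets \<nu> = sets borel"
  shows "(\<lambda>x. measure \<nu> {y \<in> space \<nu>. grid_cell r x y = k}) \<in> borel_measurable borel"
proof -
  interpret prob_space \<nu> by fact
  have "Measurable.pred (borel \<Otimes>\<^sub>M borel)
      (\<lambda>p::(real^'d) \<times> (real^'d). \<forall>i\<in>UNIV. \<lfloor>snd p $ i / r$i + fst p $ i\<rfloor> = k$i)"
    by measurable
  then have "{p \<in> space (borel \<Otimes>\<^sub>M \<nu>). snd p \<in> {y \<in> space \<nu>. grid_cell r (fst p) y = k}}
      \<in> sets (borel \<Otimes>\<^sub>M (borel :: (real^'d) measure))"
    using sets_eq_imp_space_eq[OF assms(2)]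
    by (simp add: pred_def space_pair_measure grid_cell_def vec_eq_iff)
  moreover have "sets ((borel :: (real^'d) measure) \<Otimes>\<^sub>M \<nu>)
      = sets (borel \<Otimes>\<^sub>M (borel :: (real^'d) measure))"
    using assms(2) by (intro sets_pair_measure_cong) auto
  ultimately have "{p \<in> space (borel \<Otimes>\<^sub>M \<nu>). snd p \<in> {y \<in> space \<nu>. grid_cell r (fst p) y = k}}
      \<in> sets (borel \<Otimes>\<^sub>M \<nu>)"
    by (simp only:)
  then show ?thesis by (intro measurable_measure) auto
qed

definition unit_cube :: "(real^'d::finite) set" where
  "unit_cube = {x. \<forall>i. 0 \<le> x$i \<and> x$i < 1}"

lemma avg_ent_unit_cube: "avg_ent \<nu> r = (LINT x : unit_cube | lborel. floor_ent \<nu> r x)"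
  unfolding avg_ent_def unit_cube_def ..

lemma unit_cube_sets [measurable]: "unit_cube \<in> sets (borel :: (real^'d::finite) measure)"
proof -
  have "Measurable.pred borel (\<lambda>x::real^'d. \<forall>i\<in>UNIV. 0 \<le> x$i \<and> x$i < 1)" by measurable
  then show ?thesis by (simp add: pred_def unit_cube_def)
qed

lemma unit_cube_subset_cbox: "(unit_cube :: (real^'d::finite) set) \<subseteq> cbox 0 1"
  by (auto simp: unit_cube_def mem_box_cart) (meson less_imp_le)

lemma emeasure_unit_cube_finite: "emeasure lborel (unit_cube :: (real^'d::finite) set) < \<infinity>"
proof -
  have "emeasure lborel (unit_cube :: (real^'d) set) \<le> emeasure lborel (cbox 0 (1 :: real^'d))"
    by (rule emeasure_mono[OF unit_cube_subset_cbox]) simp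
  then show ?thesis using emeasure_lborel_cbox_finite by (rule le_less_trans)
qed

lemma measure_unit_cube_le_1: "measure lborel (unit_cube :: (real^'d::finite) set) \<le> 1"
proof -
  have "measure lborel (unit_cube :: (real^'d) set) \<le> measure lborel (cbox 0 (1 :: real^'d))"
    by (rule measure_mono_fmeasurable[OF unit_cube_subset_cbox]) (simp_all add: unit_cube_sets)
  also have "\<dots> = 1"
  proof -
    have "(0 :: real^'d) \<in> cbox 0 1" by (simp add: mem_box_cart)
    then show ?thesis by (subst content_cbox_cart) auto
  qed
  finally show ?thesis .
qed

lemma floor_ent_set_borel_measurable:
  fixes \<nu> :: "(real^'d::finite) measure"
  assumes "cpt_prob \<nu>" and r: "\<And>i. 0 < r$i"
  shows "set_borel_measurable lborel unit_cube (floor_ent \<nu> r)"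
proof -
  interpret prob_space \<nu> using cpt_probD[OF assms(1)] by simp
  obtain X where X: "\<And>x. x \<in> (unit_cube :: (real^'d) set) \<Longrightarrow> norm x \<le> X"
    using bounded_subset[OF bounded_cbox unit_cube_subset_cbox] by (auto simp: bounded_iff)
  obtain T where T: "finite T" "\<And>x. norm x \<le> X \<Longrightarrow> AE y in \<nu>. grid_cell r x y \<in> T"
    using cpt_prob_grid_cells_finite[OF assms] by blast
  define f where "f x = (\<Sum>k\<in>T. shannon_term (measure \<nu> {y \<in> space \<nu>. grid_cell r x y = k}))"
    for x
  have "floor_ent \<nu> r x = f x" if "x \<in> unit_cube" for x
    unfolding floor_ent_eq_disc_entropy f_def
    using T(1) T(2)[OF X[OF that]] grid_cell_fibre_sets[OF cpt_probD(2)[OF assms(1)]]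
    by (rule disc_entropy_eq_sum)
  then have "(\<lambda>x. indicator unit_cube x *\<^sub>R floor_ent \<nu> r x) = (\<lambda>x. indicator unit_cube x * f x)"
    by (intro ext) (simp split: split_indicator)
  moreover have "shannon_term \<in> borel_measurable borel"
    unfolding shannon_term_def by measurable
  then have "(\<lambda>x. indicator unit_cube x * f x) \<in> borel_measurable lborel"
    unfolding f_def using measurable_measure_grid_fibre[OF cpt_probD(1,2)[OF assms(1)]]
    by measurable
  ultimately show ?thesis
    unfolding set_borel_measurable_def by simp
qed

lemma floor_ent_set_integrable:
  fixes \<nu> :: "(real^'d::finite) measure"
  assumes "cpt_prob \<nu>" and r: "\<And>i. 0 < r$i"
  shows "set_integrable lborel unit_cube (floor_ent \<nu> r)"
proof -
  define B where "B = floor_ent \<nu> r 0 + log 2 (3 ^ CARD('d))"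
  have "floor_ent \<nu> r x \<le> B" for x
    using floor_ent_le_coarser[OF assms(1) r r, of 1 x 0] by (simp add: B_def)
  then show ?thesis
    unfolding set_integrable_def
    using floor_ent_set_borel_measurable[OF assms] floor_ent_nonneg[OF assms(1)]
      emeasure_unit_cube_finite
    by (intro integrableI_bounded_set[where A=unit_cube and B=B])
      (auto simp: set_borel_measurable_def indicator_def)
qed

lemma avg_ent_le_coarser:
  fixes \<nu> :: "(real^'d::finite) measure" and r r' :: "real^'d"
  assumes "cpt_prob \<nu>" and r: "\<And>i. 0 < r$i" and r': "\<And>i. 0 < r'$i"
    and R: "\<And>i. r'$i \<le> R * r$i"
  shows "avg_ent \<nu> r \<le> avg_ent \<nu> r' + log 2 ((R + 2) ^ CARD('d))"
proof -
  define c where "c = log 2 ((R + 2) ^ CARD('d))"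
  have "0 < R"
    using less_le_trans[OF r' R] r by (metis zero_less_mult_pos2)
  then have "0 \<le> c" by (simp add: c_def)
  have const: "set_integrable lborel (unit_cube :: (real^'d) set) (\<lambda>_. c)"
    unfolding set_integrable_def using emeasure_unit_cube_finite
    by (intro integrableI_bounded_set[where A=unit_cube and B="\<bar>c\<bar>"]) auto
  have "avg_ent \<nu> r \<le> (LINT x : unit_cube | lborel. floor_ent \<nu> r' x + c)"
    unfolding avg_ent_unit_cube c_def
    using floor_ent_set_integrable[OF assms(1) r] floor_ent_set_integrable[OF assms(1) r'] const
    by (intro set_integral_mono floor_ent_le_coarser[OF assms]) (auto simp: c_def)
  also have "\<dots> = avg_ent \<nu> r' + measure lborel (unit_cube :: (real^'d) set) * c"
    using floor_ent_set_integrable[OF assms(1) r'] const emeasure_unit_cube_finite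
      set_integral_const[of "unit_cube :: (real^'d) set" lborel c]
    by (simp add: avg_ent_unit_cube less_top)
  also have "\<dots> \<le> avg_ent \<nu> r' + c"
    using mult_left_le_one_le[OF \<open>0 \<le> c\<close> measure_nonneg measure_unit_cube_le_1] by simp
  finally show ?thesis unfolding c_def .
qed

section \<open>The scales s_n\<close>

lemma floor_divide_bounds:
  fixes s L :: real
  assumes "0 < L"
  shows "of_int \<lfloor>s / L\<rfloor> * L \<le> s" "s < (of_int \<lfloor>s / L\<rfloor> + 1) * L"
proof -
  have "of_int \<lfloor>s / L\<rfloor> \<le> s / L" "s / L < of_int \<lfloor>s / L\<rfloor> + 1" by linarith+
  then show "of_int \<lfloor>s / L\<rfloor> * L \<le> s" "s < (of_int \<lfloor>s / L\<rfloor> + 1) * L"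
    using pos_le_divide_eq[OF assms] pos_divide_less_eq[OF assms] by blast+
qed

lemma the_quotient_eq_floor:
  fixes s L :: real
  assumes "0 < L" "L \<le> s"
  shows "(THE b::nat. 0 < b \<and> L \<le> s / real b \<and> s / (1 + real b) < L) = nat \<lfloor>s / L\<rfloor>"
proof (rule the_equality)
  define q where "q = \<lfloor>s / L\<rfloor>"
  have "1 \<le> s / L" using assms by simp
  then have "1 \<le> q" by (simp add: q_def)
  moreover have "of_int q * L \<le> s" "s < (of_int q + 1) * L"
    unfolding q_def using floor_divide_bounds[OF assms(1)] by blast+
  ultimately show "0 < nat q \<and> L \<le> s / real (nat q) \<and> s / (1 + real (nat q)) < L"
    using assms(1) by (simp add: pos_le_divide_eq pos_divide_less_eq algebra_simps)
next
  fix b :: nat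
  assume "0 < b \<and> L \<le> s / real b \<and> s / (1 + real b) < L"
  then have "real b \<le> s / L" "s / L < real b + 1"
    using assms(1) by (simp_all add: pos_le_divide_eq le_divide_eq pos_divide_less_eq
        divide_less_eq mult.commute add.commute)
  then have "\<lfloor>s / L\<rfloor> = int b" by linarith
  then show "b = nat \<lfloor>s / L\<rfloor>" by simp
qed

lemma seq_s_bounds:
  assumes "admissible_lambda lam"
  shows "lam$j ^ n \<le> seq_s lam n $ j \<and> seq_s lam n $ j \<le> 2 * lam$j ^ n"
proof (induction n)
  case (Suc n)
  define s where "s = seq_s lam n $ j"
  define L where "L = lam$j ^ Suc n"
  define q where "q = \<lfloor>s / L\<rfloor>"
  have "0 < lam$j" "lam$j < 1" using assms by (auto simp: admissible_lambda_def)
  then have "0 < L" "L < lam$j ^ n" by (simp_all add: L_def power_strict_decreasing)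
  then have "L \<le> s" using Suc.IH by (simp add: s_def)
  then have "1 \<le> q" using \<open>0 < L\<close> by (simp add: q_def)
  have "seq_s lam (Suc n) $ j = s / real (nat q)"
    using the_quotient_eq_floor[OF \<open>0 < L\<close> \<open>L \<le> s\<close>] by (simp add: s_def L_def q_def)
  also have "\<dots> = s / of_int q" using \<open>1 \<le> q\<close> by simp
  finally have step: "seq_s lam (Suc n) $ j = s / of_int q" .
  have "of_int q * L \<le> s" "s < (of_int q + 1) * L"
    unfolding q_def using floor_divide_bounds[OF \<open>0 < L\<close>] by blast+
  moreover have "(of_int q + 1) * L \<le> (2 * L) * of_int q"
    using mult_left_mono[of 1 "of_int q" L] \<open>1 \<le> q\<close> \<open>0 < L\<close> by (simp add: algebra_simps)
  ultimately have "L * of_int q \<le> s" "s \<le> (2 * L) * of_int q"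
    by (simp_all add: mult.commute)
  then have "L \<le> s / of_int q" "s / of_int q \<le> 2 * L"
    using \<open>1 \<le> q\<close> by (simp_all add: pos_le_divide_eq pos_divide_le_eq)
  then show ?case by (simp only: step L_def)
qed simp

lemma seq_s_powr_bounds:
  assumes "admissible_lambda lam"
  shows "lam$i powr real n \<le> seq_s lam n $ i" "seq_s lam n $ i \<le> 2 * lam$i powr real n"
proof -
  have "0 < lam$i" using assms by (auto simp: admissible_lambda_def)
  then show "lam$i powr real n \<le> seq_s lam n $ i" "seq_s lam n $ i \<le> 2 * lam$i powr real n"
    using seq_s_bounds[OF assms, of i n] by (simp_all add: powr_realpow)
qed

lemma seq_s_pos:
  assumes "admissible_lambda lam"
  shows "0 < seq_s lam n $ i"
proof -
  have "0 < lam$i" using assms by (auto simp: admissible_lambda_def)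
  then have "0 < lam$i powr real n" by simp
  then show ?thesis using seq_s_powr_bounds(1)[OF assms, of i n] by (rule less_le_trans)
qed

lemma powr_le_powr_gap:
  fixes x L u v E :: real
  assumes "0 < L" "L \<le> x" "x < 1" "v - u \<le> E" "0 \<le> E"
  shows "x powr u \<le> L powr (- E) * x powr v"
proof -
  have "x powr (u - v) \<le> L powr (- E)"
  proof (cases "0 \<le> u - v")
    case True
    then have "x powr (u - v) \<le> 1" "1 \<le> L powr (- E)"
      using assms by (auto intro!: powr_le1 ge_one_powr_ge_zero simp: powr_minus_divide)
    then show ?thesis by linarith
  next
    case False
    then have "x powr (u - v) \<le> L powr (u - v)"
      using assms by (intro powr_mono2') auto
    also have "\<dots> \<le> L powr (- E)"
      using assms by (intro powr_mono') auto
    finally show ?thesis .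
  qed
  moreover have "x powr u = x powr v * x powr (u - v)"
    using assms by (simp add: powr_add[symmetric])
  ultimately show ?thesis
    using assms by (simp add: mult.commute mult_left_mono)
qed

definition scale_gap_const :: "real^'d::finite \<Rightarrow> real \<Rightarrow> real" where
  "scale_gap_const lam E = log 2 ((2 * (MIN i. lam$i) powr (- E) + 2) ^ CARD('d))"

lemma scale_gap_const_nonneg:
  fixes lam :: "real^'d::finite"
  shows "0 \<le> scale_gap_const lam E"
proof -
  have "1 \<le> (2 * (MIN i. lam$i) powr (- E) + 2) ^ CARD('d)"
    by (rule one_le_power) simp
  moreover have "0 \<le> log 2 y" if "1 \<le> y" for y :: real
    using that by simp
  ultimately show ?thesis unfolding scale_gap_const_def by blast
qed

lemma avg_ent_le_scale_gap:
  fixes lam r r' :: "real^'d::{finite,linorder}"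
  assumes adm: "admissible_lambda lam" and "cpt_prob \<nu>"
    and r: "\<And>i. lam$i powr v \<le> r$i" and r': "\<And>i. 0 < r'$i" "\<And>i. r'$i \<le> 2 * lam$i powr u"
    and "v - u \<le> E" "0 \<le> E"
  shows "avg_ent \<nu> r \<le> avg_ent \<nu> r' + scale_gap_const lam E"
proof -
  define L where "L = (MIN i. lam$i)"
  have lam: "0 < lam$i" "lam$i < 1" for i using adm by (auto simp: admissible_lambda_def)
  have "L \<le> lam$i" for i unfolding L_def by (intro Min_le) auto
  moreover have "0 < L" unfolding L_def using lam by (subst Min_gr_iff) auto
  ultimately have "r'$i \<le> (2 * L powr (- E)) * r$i" for i
  proof -
    have "r'$i \<le> 2 * lam$i powr u" by (fact r'(2))
    also have "\<dots> \<le> 2 * (L powr (- E) * lam$i powr v)"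
      using powr_le_powr_gap[OF \<open>0 < L\<close> \<open>L \<le> lam$i\<close> lam(2) assms(6,7)] by simp
    also have "\<dots> \<le> (2 * L powr (- E)) * r$i"
      using mult_left_mono[OF r[of i], of "2 * L powr (- E)"] by simp
    finally show ?thesis .
  qed
  moreover have "0 < r$i" for i
    using lam(1)[of i] r[of i] by (metis less_le_trans powr_gt_zero less_irrefl)
  ultimately show ?thesis
    unfolding scale_gap_const_def L_def[symmetric]
    using avg_ent_le_coarser[OF assms(2) _ r'(1)] by blast
qed

section \<open>Good blocks\<close>

lemma sum_int_telescope:
  fixes h :: "int \<Rightarrow> 'a::ab_group_add"
  assumes "p \<le> q"
  shows "(\<Sum>n\<in>{p..<q}. h n - h (n - 1)) = h (q - 1) - h (p - 1)"
  using assms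
proof (induction q rule: int_ge_induct)
  case (step q)
  have "{p..<q + 1} = insert q {p..<q}" using step.hyps by auto
  then show ?case using step.IH by simp
qed simp

text \<open>Downward induction from q with the invariant strengthened by 2 e p. A block that is not
  good is either below beta/6 or below 2/3 of its successor; in the latter case the successor
  exceeds beta/6, so its e-term pays for both.\<close>
lemma sum_le_good_blocks:
  fixes a :: "int \<Rightarrow> real"
  assumes "0 < \<beta>" "p \<le> q" "a q \<le> B" "0 \<le> B"
  shows "(\<Sum>n\<in>{p..<q}. a n)
    \<le> 3 * (\<Sum>n\<in>{n. p \<le> n \<and> n < q \<and> max ((2/3) * a (n + 1)) (\<beta>/6) \<le> a n}. a n)
       + \<beta>/6 * of_int (q - p) + 2 * B"
proof -
  define e where "e n = (if \<beta>/6 \<le> a n then a n else 0)" for n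
  define good where "good p = {n. p \<le> n \<and> n < q \<and> max ((2/3) * a (n + 1)) (\<beta>/6) \<le> a n}" for p
  have e_nonneg: "0 \<le> e n" for n using assms(1) by (simp add: e_def)
  have "(\<Sum>n\<in>{p..<q}. a n) + 2 * e p \<le> 3 * sum a (good p) + \<beta>/6 * of_int (q - p) + 2 * B"
    using assms(2)
  proof (induction p rule: int_le_induct)
    case base
    have "good q = {}" by (auto simp: good_def)
    then show ?case using assms(3,4) by (simp add: e_def)
  next
    case (step p)
    have blocks: "{p - 1..<q} = insert (p - 1) {p..<q}" using step.hyps by auto
    then have sum_blocks: "(\<Sum>n\<in>{p - 1..<q}. a n) = a (p - 1) + (\<Sum>n\<in>{p..<q}. a n)" by simp
    have pred_le: "p - 1 \<le> n \<longleftrightarrow> n = p - 1 \<or> p \<le> n" for n by arith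
    have slack: "\<beta>/6 * of_int (q - (p - 1)) = \<beta>/6 * of_int (q - p) + \<beta>/6"
      by (simp add: field_simps)
    show ?case
    proof (cases "max ((2/3) * a p) (\<beta>/6) \<le> a (p - 1)")
      case True
      then have "good (p - 1) = insert (p - 1) (good p)" "e (p - 1) = a (p - 1)"
        using step.hyps by (auto simp: good_def e_def)
      moreover have "finite (good p)" "p - 1 \<notin> good p"
        unfolding good_def by (rule finite_subset[of _ "{p..<q}"]) auto
      ultimately have "sum a (good (p - 1)) = a (p - 1) + sum a (good p)"
        by simp
      then show ?thesis
        using step.IH e_nonneg[of p] assms(1) \<open>e (p - 1) = a (p - 1)\<close> sum_blocks slack by linarith
    next
      case False
      then have "good (p - 1) = good p" by (auto simp: good_def pred_le)
      then have "sum a (good (p - 1)) = sum a (good p)" by simp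
      moreover have "a (p - 1) + 2 * e (p - 1) \<le> 2 * e p + \<beta>/6"
        using False assms(1) e_nonneg[of p] by (auto simp: e_def)
      ultimately show ?thesis
        using step.IH sum_blocks slack by linarith
    qed
  qed
  then show ?thesis using e_nonneg[of p] by (simp add: good_def)
qed

definition block_ent :: "real^'d::finite \<Rightarrow> nat \<Rightarrow> (real^'d) measure \<Rightarrow> int \<Rightarrow> real" where
  "block_ent lam N \<nu> n =
     cond_ent \<nu> (seq_s lam (nat (int N * n))) (seq_s lam (nat (int N * n - int N)))"

lemma block_ent_succ:
  "block_ent lam N \<nu> (n + 1) =
     cond_ent \<nu> (seq_s lam (nat (int N * n + int N))) (seq_s lam (nat (int N * n)))"
  by (simp add: block_ent_def distrib_left)

lemma block_index_bounds:
  fixes N :: nat and t1 t2 lg :: real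
  defines "\<tau>1 \<equiv> \<lceil>t1 / real N + 1 - 1 / (real N * lg)\<rceil>" and "\<tau>2 \<equiv> \<lfloor>t2 / real N\<rfloor>"
  assumes "1 \<le> N" "0 < t1" "lg < 0" "3 * real N - 1 / lg < t2 - t1"
  shows "t1 + real N - 1 / lg \<le> real N * of_int \<tau>1" "real N * of_int \<tau>1 < t1 + 2 * real N - 1 / lg"
    and "t2 - real N < real N * of_int \<tau>2" "real N * of_int \<tau>2 \<le> t2"
    and "1 \<le> \<tau>1" "\<tau>1 < \<tau>2" "of_int (\<tau>2 - \<tau>1) \<le> t2 - t1"
proof -
  have N: "0 < real N" using assms(3) by simp
  define x where "x = t1 / real N + 1 - 1 / (real N * lg)"
  have "real N * x = t1 + real N - 1 / lg"
    using N assms(5) by (simp add: x_def field_simps)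
  moreover have "x \<le> of_int \<tau>1" "of_int \<tau>1 < x + 1"
    unfolding \<tau>1_def x_def by linarith+
  then have "real N * x \<le> real N * of_int \<tau>1" "real N * of_int \<tau>1 < real N * (x + 1)"
    using N by simp_all
  moreover have "real N * (x + 1) = real N * x + real N" by (simp add: distrib_left)
  ultimately show \<tau>1: "t1 + real N - 1 / lg \<le> real N * of_int \<tau>1"
    "real N * of_int \<tau>1 < t1 + 2 * real N - 1 / lg"
    by linarith+
  have "t2 / real N - 1 < of_int \<tau>2" "of_int \<tau>2 \<le> t2 / real N"
    unfolding \<tau>2_def by linarith+
  then show \<tau>2: "t2 - real N < real N * of_int \<tau>2" "real N * of_int \<tau>2 \<le> t2"
    using N by (simp_all add: field_simps)
  have "1 / lg < 0" using assms(5) by simp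
  then have "real N * 1 < real N * of_int \<tau>1" using \<tau>1(1) assms(4) by linarith
  then show "1 \<le> \<tau>1" using N by (simp only: mult_less_cancel_left_pos)
  have "real N * of_int \<tau>1 < real N * of_int \<tau>2" using \<tau>1(2) \<tau>2(1) assms(6) by linarith
  then show "\<tau>1 < \<tau>2" using N by simp
  then have "of_int (\<tau>2 - \<tau>1) \<le> real N * of_int (\<tau>2 - \<tau>1)"
    using assms(3) by simp
  also have "\<dots> = real N * of_int \<tau>2 - real N * of_int \<tau>1"
    by (simp add: algebra_simps)
  also have "\<dots> \<le> t2 - t1"
    using \<tau>1(1) \<tau>2(2) \<open>1 / lg < 0\<close> by linarith
  finally show "of_int (\<tau>2 - \<tau>1) \<le> t2 - t1" .
qed

lemma seq_s_block_powr_bounds: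
  assumes "admissible_lambda lam" "0 \<le> n"
  shows "lam$i powr (real N * of_int n) \<le> seq_s lam (nat (int N * n)) $ i"
    and "seq_s lam (nat (int N * n)) $ i \<le> 2 * lam$i powr (real N * of_int n)"
  using seq_s_powr_bounds[OF assms(1), where i=i and n="nat (int N * n)"] assms(2) by simp_all

lemma block_ent_telescoping:
  fixes lam :: "real^'d::{finite,linorder}" and N :: nat and t1 t2 :: real
  defines "\<tau>1 \<equiv> \<lceil>t1 / real N + 1 - 1 / (real N * log 2 (lam1 lam))\<rceil>" and "\<tau>2 \<equiv> \<lfloor>t2 / real N\<rfloor>"
    and "D \<equiv> scale_gap_const lam (2 * real N - 1 / log 2 (lam1 lam))"
  assumes adm: "admissible_lambda lam" and N: "1 \<le> N" and cp: "cpt_prob \<nu>"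
    and t1: "0 < t1" and gap: "3 * real N - 1 / log 2 (lam1 lam) < t2 - t1"
  shows "block_ent lam N \<nu> \<tau>2 \<le> D"
    and "cond_ent \<nu> (vpowr lam t2) (vpowr lam t1) - 2 * D \<le> (\<Sum>n\<in>{\<tau>1..<\<tau>2}. block_ent lam N \<nu> n)"
proof -
  define h where "h n = avg_ent \<nu> (seq_s lam (nat (int N * n)))" for n
  define c where "c = 1 / log 2 (lam1 lam)"
  have "0 < lam1 lam" "lam1 lam < 1" using adm by (auto simp: admissible_lambda_def lam1_def)
  then have lg: "log 2 (lam1 lam) < 0" by simp
  then have "c < 0" by (simp add: c_def)
  note \<tau> = block_index_bounds[OF N t1 lg gap, folded \<tau>1_def \<tau>2_def c_def]
  have block_h: "block_ent lam N \<nu> n = h n - h (n - 1)" for n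
    by (simp add: block_ent_def cond_ent_def h_def right_diff_distrib)
  have scale: "avg_ent \<nu> r \<le> avg_ent \<nu> r' + D"
    if "\<And>i. lam$i powr v \<le> r$i" "\<And>i. 0 < r'$i" "\<And>i. r'$i \<le> 2 * lam$i powr u"
      "v - u \<le> 2 * real N - c" for r r' u v
  proof -
    have "0 \<le> 2 * real N - c" using \<open>c < 0\<close> by simp
    with that show ?thesis unfolding D_def c_def by (rule avg_ent_le_scale_gap[OF adm cp])
  qed
  have lam_nonzero: "lam$i \<noteq> 0" for i
    using adm by (auto simp: admissible_lambda_def dest: spec[of _ i])
  note s_lower = seq_s_block_powr_bounds(1)[OF adm] and s_upper = seq_s_block_powr_bounds(2)[OF adm]
    and s_pos = seq_s_pos[OF adm]
  have "h \<tau>2 \<le> h (\<tau>2 - 1) + D"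
    unfolding h_def using s_lower[of \<tau>2] s_upper[of "\<tau>2 - 1"] s_pos \<tau>(5,6) \<open>c < 0\<close>
    by (intro scale[where v = "real N * of_int \<tau>2" and u = "real N * of_int (\<tau>2 - 1)"])
      (auto simp: algebra_simps)
  then show "block_ent lam N \<nu> \<tau>2 \<le> D"
    by (simp add: block_h)
  have "avg_ent \<nu> (vpowr lam t2) \<le> h (\<tau>2 - 1) + D"
    unfolding h_def using s_upper[of "\<tau>2 - 1"] s_pos \<tau>(3,5,6) \<open>c < 0\<close>
    by (intro scale[where v = t2 and u = "real N * of_int (\<tau>2 - 1)"])
      (auto simp: vpowr_def algebra_simps)
  moreover have "h (\<tau>1 - 1) \<le> avg_ent \<nu> (vpowr lam t1) + D"
    unfolding h_def using s_lower[of "\<tau>1 - 1"] lam_nonzero \<tau>(2,5)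
    by (intro scale[where v = "real N * of_int (\<tau>1 - 1)" and u = t1])
      (auto simp: vpowr_def algebra_simps)
  moreover have "(\<Sum>n\<in>{\<tau>1..<\<tau>2}. block_ent lam N \<nu> n) = h (\<tau>2 - 1) - h (\<tau>1 - 1)"
    unfolding block_h using \<tau>(6) by (intro sum_int_telescope) simp
  ultimately show "cond_ent \<nu> (vpowr lam t2) (vpowr lam t1) - 2 * D
      \<le> (\<Sum>n\<in>{\<tau>1..<\<tau>2}. block_ent lam N \<nu> n)"
    unfolding cond_ent_def by linarith
qed

lemma sum_good_blocks_ge:
  fixes lam :: "real^'d::{finite,linorder}" and N :: nat and t1 t2 :: real
  defines "\<tau>1 \<equiv> \<lceil>t1 / real N + 1 - 1 / (real N * log 2 (lam1 lam))\<rceil>" and "\<tau>2 \<equiv> \<lfloor>t2 / real N\<rfloor>"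
    and "D \<equiv> scale_gap_const lam (2 * real N - 1 / log 2 (lam1 lam))"
  assumes adm: "admissible_lambda lam" and N: "1 \<le> N" and cp: "cpt_prob \<nu>"
    and \<beta>: "0 < \<beta>" and t1: "0 < t1" and gap: "3 * real N - 1 / log 2 (lam1 lam) < t2 - t1"
    and ent: "\<beta> < cond_ent \<nu> (vpowr lam t2) (vpowr lam t1) / (t2 - t1)"
  shows "\<beta> / 6 * (t2 - t1) - 4/3 * D
    \<le> (\<Sum>n\<in>{n. \<tau>1 \<le> n \<and> n < \<tau>2 \<and>
              max ((2/3) * block_ent lam N \<nu> (n + 1)) (\<beta> / 6) \<le> block_ent lam N \<nu> n}.
          block_ent lam N \<nu> n)"
proof -
  have "0 < lam1 lam" "lam1 lam < 1" using adm by (auto simp: admissible_lambda_def lam1_def)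
  then have "log 2 (lam1 lam) < 0" by simp
  note \<tau> = block_index_bounds[OF N t1 this gap, folded \<tau>1_def \<tau>2_def]
  note tele = block_ent_telescoping[OF adm N cp t1 gap, folded \<tau>1_def \<tau>2_def D_def]
  have "0 < \<beta> * (t2 - t1)" "\<beta> * (t2 - t1) < cond_ent \<nu> (vpowr lam t2) (vpowr lam t1)"
    using ent \<tau>(6,7) \<beta> by (simp_all add: pos_less_divide_eq mult.commute)
  moreover have "\<beta> / 6 * of_int (\<tau>2 - \<tau>1) \<le> \<beta> / 6 * (t2 - t1)"
    using \<tau>(7) \<beta> by simp
  moreover have "0 \<le> D" by (simp add: D_def scale_gap_const_nonneg)
  ultimately show ?thesis
    using sum_le_good_blocks[where a = "block_ent lam N \<nu>", OF \<beta> _ tele(1), of \<tau>1] \<tau>(6) tele(2)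
    by simp
qed

theorem lemma3p8:
  fixes lam :: "real^'d::{finite,linorder}"
  assumes "admissible_lambda lam"
  shows "\<forall>N::nat. N \<ge> 1 \<longrightarrow> (\<exists>C::real. C > 1 \<and>
    (\<forall>\<nu> (\<beta>::real) (t1::real) (t2::real).
      cpt_prob \<nu> \<and> 0 < \<beta> \<and> \<beta> < 1/2 \<and> 0 < t1 \<and> t1 < t2 \<and>
      t2 - t1 > 3 * real N - 1 / log 2 (lam1 lam) \<and>
      cond_ent \<nu> (vpowr lam t2) (vpowr lam t1) / (t2 - t1) > \<beta> \<longrightarrow>
      (let \<tau>1 = \<lceil>t1 / real N + 1 - 1 / (real N * log 2 (lam1 lam))\<rceil>;
           \<tau>2 = \<lfloor>t2 / real N\<rfloor>;
           NN = {n::int. \<tau>1 \<le> n \<and> n < \<tau>2 \<and>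
                 cond_ent \<nu> (seq_s lam (nat (int N * n))) (seq_s lam (nat (int N * n - int N)))
                   \<ge> max ((2/3) * cond_ent \<nu> (seq_s lam (nat (int N * n + int N))) (seq_s lam (nat (int N * n))))
                          (\<beta> / 6)}
       in (\<Sum>n\<in>NN. cond_ent \<nu> (seq_s lam (nat (int N * n))) (seq_s lam (nat (int N * n - int N))))
            \<ge> \<beta> / 6 * (t2 - t1) - C)))"
  apply (intro allI impI)
  subgoal for N
    apply (rule exI[of _ "4/3 * scale_gap_const lam (2 * real N - 1 / log 2 (lam1 lam)) + 2"])
    apply (intro conjI allI impI)
    subgoal using scale_gap_const_nonneg[of lam "2 * real N - 1 / log 2 (lam1 lam)"] by linarith
    subgoal for \<nu> \<beta> t1 t2
      using sum_good_blocks_ge[OF assms, where N = N and \<nu> = \<nu> and \<beta> = \<beta>]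
      unfolding block_ent_succ unfolding block_ent_def Let_def by fastforce
    done
  done

end
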